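(* Let $n\ge1$, $D\ge1$, and let $X_n=\{\mathbf{x}^0,\ldots,\mathbf{x}^{n-1}\}\subseteq\{0,1\}^D$ consist of $n$ pairwise distinct vectors, indexed so that $\mathbf{a}\cdot\mathbf{x}^0<\cdots<\mathbf{a}\cdot\mathbf{x}^{n-1}$ for some $\mathbf{a}\in\mathbb{Z}^D$. Then there is a three-layer Boolean threshold network with layer sizes $D$, $n$, $D$ that is a perfect autoencoder for $X_n$, with the second layer as middle layer.
   Context: A Boolean threshold function is a map $\{0,1\}^h\to\{0,1\}$, $\mathbf{u}\mapsto[\mathbf{w}\cdot\mathbf{u}\ge\theta]$ (value $1$ iff $\mathbf{w}\cdot\mathbf{u}\ge\theta$) with $\mathbf{w}\in\mathbb{Z}^h,\theta\in\mathbb{Z}$. An $L$-layer Boolean threshold network has layers $1,\ldots,L$; layer $1$ is the input; each node of layer $t+1$ computes a Boolean threshold function of the values of layer $t$. If layer $k$ is designated the middle layer, the encoder $\mathbf{f}$ is the map from layer $1$ values to layer $k$ values and the decoder $\mathbf{g}$ the map from layer $k$ values to layer $L$ values; the network is a perfect autoencoder for $X_n$ if $\mathbf{g}(\mathbf{f}(\mathbf{x}^i))=\mathbf{x}^i$ for all $i$. *)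

theory Defs
  imports Main
begin

text \<open>Boolean vectors in {0,1}^h are represented as functions nat \<Rightarrow> bool,
  where only coordinates 0..h-1 matter; we call u a vector of length h if it is
  False outside {0..<h} (so that equality of vectors is plain equality).\<close>

definition bvec :: "nat \<Rightarrow> (nat \<Rightarrow> bool) \<Rightarrow> bool" where
  "bvec h u \<longleftrightarrow> (\<forall>i\<ge>h. \<not> u i)"

definition bval :: "bool \<Rightarrow> int" where
  "bval b = (if b then 1 else 0)"

definition threshold_fun :: "nat \<Rightarrow> (nat \<Rightarrow> int) \<Rightarrow> int \<Rightarrow> (nat \<Rightarrow> bool) \<Rightarrow> bool" where
  "threshold_fun h w \<theta> u \<longleftrightarrow> (\<Sum>i<h. w i * bval (u i)) \<ge> \<theta>"

definition threshold_layer ::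
  "nat \<Rightarrow> nat \<Rightarrow> (nat \<Rightarrow> nat \<Rightarrow> int) \<Rightarrow> (nat \<Rightarrow> int) \<Rightarrow> (nat \<Rightarrow> bool) \<Rightarrow> (nat \<Rightarrow> bool)" where
  "threshold_layer h m W \<Theta> u = (\<lambda>j. j < m \<and> threshold_fun h (W j) (\<Theta> j) u)"

definition perfect_autoencoder_3layer ::
  "nat \<Rightarrow> nat \<Rightarrow> (nat \<Rightarrow> nat \<Rightarrow> int) \<Rightarrow> (nat \<Rightarrow> int) \<Rightarrow> (nat \<Rightarrow> nat \<Rightarrow> int) \<Rightarrow> (nat \<Rightarrow> int)
     \<Rightarrow> (nat \<Rightarrow> nat \<Rightarrow> bool) \<Rightarrow> bool" where
  "perfect_autoencoder_3layer D n W1 \<Theta>1 W2 \<Theta>2 x \<longleftrightarrow>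
     (\<forall>i<n. threshold_layer n D W2 \<Theta>2 (threshold_layer D n W1 \<Theta>1 (x i)) = x i)"

end

theory Submission
  imports Defs
begin

text \<open>The encoder maps x^i to the thermometer code with i + 1 leading ones: hidden
  node j fires iff a\<cdot>x \<ge> a\<cdot>x^j, which by the strict ordering of the scores happens
  exactly for j \<le> i.  Output node k has threshold 1 and weights x^j_k - x^(j-1)_k (with
  x^(-1) = 0), so on the thermometer code its weighted sum telescopes to x^i_k.\<close>

lemma threshold_layer_shared_weights_thermometer:
  assumes "strict_mono_on {..<n} s" and "i < n"
    and "(\<Sum>k<h. w k * bval (u k)) = s i"
  shows "threshold_layer h n (\<lambda>_. w) s u = (\<lambda>j. j \<le> i)"
proof
  fix j
  have "(j < n \<and> s j \<le> s i) \<longleftrightarrow> j \<le> i"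
    using strict_mono_on_less_eq[OF assms(1), of j i] \<open>i < n\<close> by auto
  then show "threshold_layer h n (\<lambda>_. w) s u j = (j \<le> i)"
    using assms(3) by (simp add: threshold_layer_def threshold_fun_def)
qed

lemma sum_times_bval_prefix:
  fixes w :: "nat \<Rightarrow> int"
  assumes "i < n"
  shows "(\<Sum>j<n. w j * bval (j \<le> i)) = (\<Sum>j<Suc i. w j)"
proof -
  have "(\<Sum>j<n. w j * bval (j \<le> i)) = (\<Sum>j\<in>{..<n} \<inter> {j. j \<le> i}. w j)"
    by (simp add: bval_def sum.inter_restrict if_distrib cong: if_cong)
  also have "{..<n} \<inter> {j. j \<le> i} = {..<Suc i}"
    using assms by auto
  finally show ?thesis .
qed

definition thermometer_decoder_weights :: "(nat \<Rightarrow> nat \<Rightarrow> bool) \<Rightarrow> nat \<Rightarrow> nat \<Rightarrow> int" where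
  "thermometer_decoder_weights y k j =
     bval (y j k) - (case j of 0 \<Rightarrow> 0 | Suc j' \<Rightarrow> bval (y j' k))"

lemma threshold_layer_thermometer_decoder:
  assumes "i < n"
  shows "threshold_layer n h (thermometer_decoder_weights y) (\<lambda>_. 1) (\<lambda>j. j \<le> i)
           = (\<lambda>k. k < h \<and> y i k)"
proof
  fix k
  define prev where "prev j = (case j of 0 \<Rightarrow> 0 | Suc j' \<Rightarrow> bval (y j' k))" for j
  have "(\<Sum>j<n. thermometer_decoder_weights y k j * bval (j \<le> i))
          = (\<Sum>j<Suc i. prev (Suc j) - prev j)"
    unfolding sum_times_bval_prefix[OF assms] thermometer_decoder_weights_def prev_def by simp
  also have "\<dots> = bval (y i k)"
    unfolding sum_lessThan_telescope by (simp add: prev_def)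
  finally show "threshold_layer n h (thermometer_decoder_weights y) (\<lambda>_. 1) (\<lambda>j. j \<le> i) k
                  = (k < h \<and> y i k)"
    by (simp add: threshold_layer_def threshold_fun_def bval_def)
qed

lemma bvec_restrict_eq:
  assumes "bvec h u"
  shows "(\<lambda>k. k < h \<and> u k) = u"
proof
  fix k
  show "(k < h \<and> u k) = u k"
    using assms by (cases "k < h") (auto simp: bvec_def)
qed

theorem theorem18:
  fixes n D :: nat and x :: "nat \<Rightarrow> nat \<Rightarrow> bool" and a :: "nat \<Rightarrow> int"
  assumes "n \<ge> 1" and "D \<ge> 1"
    and "\<forall>i<n. bvec D (x i)"
    and "\<forall>i<n. \<forall>j<n. i \<noteq> j \<longrightarrow> x i \<noteq> x j"
    and "\<forall>i j. i < j \<and> j < n \<longrightarrow>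
           (\<Sum>k<D. a k * bval (x i k)) < (\<Sum>k<D. a k * bval (x j k))"
  shows "\<exists>W1 \<Theta>1 W2 \<Theta>2. perfect_autoencoder_3layer D n W1 \<Theta>1 W2 \<Theta>2 x"
proof -
  define score where "score i = (\<Sum>k<D. a k * bval (x i k))" for i
  have "strict_mono_on {..<n} score"
    using assms(5) by (auto simp: strict_mono_on_def score_def)
  then have encode: "threshold_layer D n (\<lambda>_. a) score (x i) = (\<lambda>j. j \<le> i)" if "i < n" for i
    using threshold_layer_shared_weights_thermometer that by (simp add: score_def)
  have "perfect_autoencoder_3layer D n (\<lambda>_. a) score (thermometer_decoder_weights x) (\<lambda>_. 1) x"
    using assms(3)
    by (simp add: perfect_autoencoder_3layer_def encode threshold_layer_thermometer_decoder
        bvec_restrict_eq)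
  then show ?thesis by blast
qed

end
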